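(* (Working in $\mathbf{ZF}$.) Suppose that $f:X\to Y$ is a W-continuous mapping of a generalized topological space $X$ to a zero-dimensional generalized topological space $Y$. Then $f$ is w-continuous.
   Context: A generalized topological space (gts) $(X,\mathrm{Op}_X,\mathrm{Cov}_X)$ is in the sense of Delfs–Knebusch: $\mathrm{Op}_X\subseteq\mathcal P(X)$, $\mathrm{Cov}_X\subseteq\mathcal P(\mathrm{Op}_X)$ with (A1) $\emptyset,X$ open; (A2) finite unions/intersections of open sets open; (A3) finite families of open sets are in $\mathrm{Cov}_X$; (A4) unions of members of $\mathrm{Cov}_X$ are open; (A5) for $\mathcal U\in\mathrm{Cov}_X$ and open $V\subseteq\bigcup\mathcal U$, $\{V\cap U:U\in\mathcal U\}\in\mathrm{Cov}_X$; (A6) if $\mathcal U\in\mathrm{Cov}_X$ and $\mathcal V_U\in\mathrm{Cov}_X$ with $\bigcup\mathcal V_U=U$ then $\bigcup_U\mathcal V_U\in\mathrm{Cov}_X$; (A7) if $\mathcal U\in\mathrm{Cov}_X$, $\mathcal V\subseteq\mathrm{Op}_X$, $\bigcup\mathcal V=\bigcup\mathcal U$ and each member of $\mathcal U$ lies in a member of $\mathcal V$, then $\mathcal V\in\mathrm{Cov}_X$; (A8) if $\mathcal U\in\mathrm{Cov}_X$, $V\subseteq\bigcup\mathcal U$ and $V\cap U\in\mathrm{Op}_X$ for all $U\in\mathcal U$, then $V\in\mathrm{Op}_X$. For families $\mathcal U,\mathcal V$ of sets, $\mathcal U\preceq\mathcal V$ means every member of $\mathcal U$ is contained in a member of $\mathcal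 V$ and $\bigcup\mathcal U=\bigcup\mathcal V$; $f^{-1}(\mathcal V)=\{f^{-1}(V):V\in\mathcal V\}$. A map $f:X\to Y$ is w-continuous if for every finite (equivalently, essentially finite) family $\mathcal V\subseteq\mathrm{Op}_Y$ covering $Y$ there is a finite (essentially finite) family $\mathcal U\subseteq\mathrm{Op}_X$ covering $X$ with $\mathcal U\preceq f^{-1}(\mathcal V)$; it is W-continuous if for every $\mathcal V\in\mathrm{Cov}_Y$ covering $Y$ there is $\mathcal U\in\mathrm{Cov}_X$ covering $X$ with $\mathcal U\preceq f^{-1}(\mathcal V)$. A gts $Y$ is zero-dimensional if for each finite covering $\mathcal V\subseteq\mathrm{Op}_Y$ of $Y$ there is a pairwise disjoint finite covering $\mathcal W\subseteq\mathrm{Op}_Y$ of $Y$ with $\mathcal W\preceq\mathcal V$. *)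

theory Defs
  imports Main
begin

text \<open>Generalized topological space (Delfs--Knebusch) on carrier X with
  open sets Op and admissible coverings Cov, axioms (A1)--(A8).\<close>
definition gts :: "'a set \<Rightarrow> 'a set set \<Rightarrow> 'a set set set \<Rightarrow> bool" where
  "gts X Op Cov \<longleftrightarrow>
     Op \<subseteq> Pow X \<and> Cov \<subseteq> Pow Op \<and>
     \<comment> \<open>(A1)\<close>
     {} \<in> Op \<and> X \<in> Op \<and>
     \<comment> \<open>(A2)\<close>
     (\<forall>U\<in>Op. \<forall>V\<in>Op. U \<union> V \<in> Op \<and> U \<inter> V \<in> Op) \<and>
     \<comment> \<open>(A3)\<close>
     (\<forall>\<U>. finite \<U> \<and> \<U> \<subseteq> Op \<longrightarrow> \<U> \<in> Cov) \<and>
     \<comment> \<open>(A4)\<close>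
     (\<forall>\<U>\<in>Cov. \<Union>\<U> \<in> Op) \<and>
     \<comment> \<open>(A5)\<close>
     (\<forall>\<U>\<in>Cov. \<forall>V\<in>Op. V \<subseteq> \<Union>\<U> \<longrightarrow> (\<lambda>U. V \<inter> U) ` \<U> \<in> Cov) \<and>
     \<comment> \<open>(A6)\<close>
     (\<forall>\<U>\<in>Cov. \<forall>\<V> :: 'a set \<Rightarrow> 'a set set.
        (\<forall>U\<in>\<U>. \<V> U \<in> Cov \<and> \<Union>(\<V> U) = U) \<longrightarrow> \<Union>(\<V> ` \<U>) \<in> Cov) \<and>
     \<comment> \<open>(A7)\<close>
     (\<forall>\<U>\<in>Cov. \<forall>\<V>. \<V> \<subseteq> Op \<and> \<Union>\<V> = \<Union>\<U> \<and> (\<forall>U\<in>\<U>. \<exists>V\<in>\<V>. U \<subseteq> V)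
        \<longrightarrow> \<V> \<in> Cov) \<and>
     \<comment> \<open>(A8)\<close>
     (\<forall>\<U>\<in>Cov. \<forall>V. V \<subseteq> \<Union>\<U> \<and> (\<forall>U\<in>\<U>. V \<inter> U \<in> Op) \<longrightarrow> V \<in> Op)"

definition refines :: "'a set set \<Rightarrow> 'a set set \<Rightarrow> bool" (infix "\<preceq>\<^sub>c" 50) where
  "\<U> \<preceq>\<^sub>c \<V> \<longleftrightarrow> (\<forall>U\<in>\<U>. \<exists>V\<in>\<V>. U \<subseteq> V) \<and> \<Union>\<U> = \<Union>\<V>"

definition preimage_fam :: "'a set \<Rightarrow> ('a \<Rightarrow> 'b) \<Rightarrow> 'b set set \<Rightarrow> 'a set set" where
  "preimage_fam X f \<V> = (\<lambda>V. X \<inter> f -` V) ` \<V>"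

definition w_continuous ::
  "'a set \<Rightarrow> 'a set set \<Rightarrow> 'b set \<Rightarrow> 'b set set \<Rightarrow> ('a \<Rightarrow> 'b) \<Rightarrow> bool" where
  "w_continuous X OpX Y OpY f \<longleftrightarrow>
     (\<forall>\<V>. finite \<V> \<and> \<V> \<subseteq> OpY \<and> \<Union>\<V> = Y \<longrightarrow>
        (\<exists>\<U>. finite \<U> \<and> \<U> \<subseteq> OpX \<and> \<Union>\<U> = X \<and> \<U> \<preceq>\<^sub>c preimage_fam X f \<V>))"

definition W_continuous ::
  "'a set \<Rightarrow> 'a set set set \<Rightarrow> 'b set \<Rightarrow> 'b set set set \<Rightarrow> ('a \<Rightarrow> 'b) \<Rightarrow> bool" where
  "W_continuous X CovX Y CovY f \<longleftrightarrow>
     (\<forall>\<V>\<in>CovY. \<Union>\<V> = Y \<longrightarrow>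
        (\<exists>\<U>\<in>CovX. \<Union>\<U> = X \<and> \<U> \<preceq>\<^sub>c preimage_fam X f \<V>))"

definition zero_dimensional :: "'b set \<Rightarrow> 'b set set \<Rightarrow> bool" where
  "zero_dimensional Y OpY \<longleftrightarrow>
     (\<forall>\<V>. finite \<V> \<and> \<V> \<subseteq> OpY \<and> \<Union>\<V> = Y \<longrightarrow>
        (\<exists>\<W>. finite \<W> \<and> \<W> \<subseteq> OpY \<and> \<Union>\<W> = Y \<and> pairwise disjnt \<W> \<and> \<W> \<preceq>\<^sub>c \<V>))"

end

theory Submission
  imports Defs
begin

text \<open>Refine the given finite cover of \<open>Y\<close> by a finite disjoint open one and pull it back
  along \<open>f\<close>. W-continuity yields an admissible covering of \<open>X\<close> refining the pulled-back family;
  since that family is pairwise disjoint, each of its members meets every set of the covering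
  either in that whole set or not at all, so by (A8) it is open. Thus the pulled-back family
  is itself a finite open cover of \<open>X\<close> refining the preimage of the given cover.\<close>

lemma gts_finite_in_Cov: "gts X Op Cov \<Longrightarrow> finite \<U> \<Longrightarrow> \<U> \<subseteq> Op \<Longrightarrow> \<U> \<in> Cov"
  unfolding gts_def by (elim conjE allE impE) (rule conjI, assumption+)

lemma gts_Cov_subset_Op: "gts X Op Cov \<Longrightarrow> \<U> \<in> Cov \<Longrightarrow> \<U> \<subseteq> Op"
  unfolding gts_def by (elim conjE) blast

lemma gts_empty_in_Op: "gts X Op Cov \<Longrightarrow> {} \<in> Op"
  unfolding gts_def by (elim conjE)

lemma gts_open_if_open_traces:
  assumes "gts X Op Cov" "\<U> \<in> Cov" "V \<subseteq> \<Union>\<U>" "\<And>U. U \<in> \<U> \<Longrightarrow> V \<inter> U \<in> Op"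
  shows "V \<in> Op"
proof -
  have "\<forall>\<U>\<in>Cov. \<forall>V. V \<subseteq> \<Union>\<U> \<and> (\<forall>U\<in>\<U>. V \<inter> U \<in> Op) \<longrightarrow> V \<in> Op"
    using assms(1) unfolding gts_def by (elim conjE)
  then show ?thesis using assms(2-4) by blast
qed

lemma gts_disjoint_coarsening_open:
  assumes gts: "gts X Op Cov" and "\<U> \<in> Cov" and ref: "\<U> \<preceq>\<^sub>c \<P>" and disj: "pairwise disjnt \<P>"
  shows "\<P> \<subseteq> Op"
proof
  fix P assume "P \<in> \<P>"
  show "P \<in> Op"
  proof (rule gts_open_if_open_traces[OF gts \<open>\<U> \<in> Cov\<close>])
    show "P \<subseteq> \<Union>\<U>" using ref \<open>P \<in> \<P>\<close> unfolding refines_def by blast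
  next
    fix U assume "U \<in> \<U>"
    then obtain P' where "P' \<in> \<P>" "U \<subseteq> P'" using ref unfolding refines_def by blast
    then have "P \<inter> U = U \<or> P \<inter> U = {}"
      using disj \<open>P \<in> \<P>\<close> unfolding pairwise_def disjnt_def by blast
    then show "P \<inter> U \<in> Op"
      using gts_Cov_subset_Op[OF gts \<open>\<U> \<in> Cov\<close>] gts_empty_in_Op[OF gts] \<open>U \<in> \<U>\<close> by (metis subsetD)
  qed
qed

lemma Union_preimage_fam: "\<Union>(preimage_fam X f \<V>) = X \<inter> f -` \<Union>\<V>"
  unfolding preimage_fam_def by blast

lemma finite_preimage_fam: "finite \<V> \<Longrightarrow> finite (preimage_fam X f \<V>)"
  unfolding preimage_fam_def by simp

lemma pairwise_disjnt_preimage_fam: "pairwise disjnt \<W> \<Longrightarrow> pairwise disjnt (preimage_fam X f \<W>)"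
  unfolding preimage_fam_def pairwise_def disjnt_def by blast

lemma preimage_fam_refines:
  assumes "\<W> \<preceq>\<^sub>c \<V>"
  shows "preimage_fam X f \<W> \<preceq>\<^sub>c preimage_fam X f \<V>"
  unfolding refines_def
proof
  show "\<forall>P\<in>preimage_fam X f \<W>. \<exists>Q\<in>preimage_fam X f \<V>. P \<subseteq> Q"
  proof
    fix P assume "P \<in> preimage_fam X f \<W>"
    then obtain W where "W \<in> \<W>" "P = X \<inter> f -` W" unfolding preimage_fam_def by blast
    moreover obtain V where "V \<in> \<V>" "W \<subseteq> V" using assms \<open>W \<in> \<W>\<close> unfolding refines_def by blast
    ultimately have "X \<inter> f -` V \<in> preimage_fam X f \<V>" "P \<subseteq> X \<inter> f -` V"
      unfolding preimage_fam_def by auto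
    then show "\<exists>Q\<in>preimage_fam X f \<V>. P \<subseteq> Q" ..
  qed
  show "\<Union>(preimage_fam X f \<W>) = \<Union>(preimage_fam X f \<V>)"
    using assms unfolding refines_def Union_preimage_fam by simp
qed

theorem proposition8p7:
  fixes f :: "'a \<Rightarrow> 'b"
  assumes "gts X OpX CovX"
    and "gts Y OpY CovY"
    and "f ` X \<subseteq> Y"
    and "W_continuous X CovX Y CovY f"
    and "zero_dimensional Y OpY"
  shows "w_continuous X OpX Y OpY f"
  unfolding w_continuous_def
proof (intro allI impI)
  fix \<V> assume "finite \<V> \<and> \<V> \<subseteq> OpY \<and> \<Union>\<V> = Y"
  then obtain \<W> where W: "finite \<W>" "\<W> \<subseteq> OpY" "\<Union>\<W> = Y" "pairwise disjnt \<W>" "\<W> \<preceq>\<^sub>c \<V>"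
    using assms(5)[unfolded zero_dimensional_def, rule_format, of \<V>] by blast
  have "\<W> \<in> CovY" using gts_finite_in_Cov[OF assms(2) W(1,2)] .
  then obtain \<U> where "\<U> \<in> CovX" "\<U> \<preceq>\<^sub>c preimage_fam X f \<W>"
    using assms(4)[unfolded W_continuous_def] W(3) by blast
  from gts_disjoint_coarsening_open[OF assms(1) this pairwise_disjnt_preimage_fam[OF W(4)]]
  have "preimage_fam X f \<W> \<subseteq> OpX" .
  moreover have "\<Union>(preimage_fam X f \<W>) = X"
    using assms(3) by (simp add: Union_preimage_fam W(3) image_subset_iff_subset_vimage Int_absorb2)
  ultimately show "\<exists>\<U>. finite \<U> \<and> \<U> \<subseteq> OpX \<and> \<Union>\<U> = X \<and> \<U> \<preceq>\<^sub>c preimage_fam X f \<V>"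
    using finite_preimage_fam[OF W(1)] preimage_fam_refines[OF W(5)] by (intro exI conjI)
qed

end
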